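(* Let $k,r\in\mathbb N$ with $r\ge2$, and let $H_1,\dots,H_r$ be graphs, $\mathbf H=(H_i)_{i\in[r]}$. Then $\mathcal B(\mathbf H)\subset\mathcal B'(\mathbf H)$.
   Context: Constants: $\delta=r^{-50}$, $p=\frac1{2^{25}k^2r^4}$. Hypergraphs are identified with their edge sets; $\mathcal G[S]=\{E\in\mathcal G:E\subset S\}$. For $\nu:\mathcal G\to\mathbb R_{\ge0}$: $e(\nu)=\sum_E\nu(E)$, $d_\nu(L)=\sum_{E\in\mathcal G,L\subset E}\nu(E)$, $\Lambda_p(\nu)=\sum_{L\subset V(\mathcal G),|L|\ge2}d_\nu(L)^2p^{-|L|}$. For $R>0$, $\mathcal G$ is $(p,R)$-Janson if some $\nu:\mathcal G\to\mathbb R_{\ge0}$ has $\Lambda_p(\nu)<e(\nu)^2/R$. For graphs $F,G$ and $G'\subset G$, $\mathfrak I_{F,G',G}$ is the hypergraph on $V(G)$ whose edges are the sets $L\subset V(G)$ with $G'[L]=G[L]\cong F$. For a colouring $c$ of edges with colours in $[r]$, $G_i$ is the subgraph of edges of colour $i$. $\mathcal B(\mathbf H)$ is the family of graphs $G$ for which some colouring $c:E(G)\to[r]$ makes $\mathfrak I_{H_i,G_i,G}$ not $(p,p\,v(G))$-Janson for every $i\in[r]$. $\mathcal B'(\mathbf H)$ is the family of graphs $G$ for which there exist $S\subset V(G)$ with $|S|\ge\delta^{2/3}v(G)$ and a colouring $c:E(G[S])\to[r]$ such that $\mathfrak I_{H_i,G_i,G}[S]$ is not $(p,2^{-9}r^{-1}\delta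 p\,v(G))$-Janson for every $i\in[r]$. *)

theory Defs
  imports Complex_Main
begin

type_synonym 'a graph = "'a set \<times> 'a set set"

definition V :: "'a graph \<Rightarrow> 'a set" where "V G = fst G"
definition E :: "'a graph \<Rightarrow> 'a set set" where "E G = snd G"

definition wf_graph :: "'a graph \<Rightarrow> bool" where
  "wf_graph G \<longleftrightarrow> finite (V G) \<and> E G \<subseteq> {e. e \<subseteq> V G \<and> card e = 2}"

definition vnum :: "'a graph \<Rightarrow> real" where "vnum G = real (card (V G))"

definition induced :: "'a graph \<Rightarrow> 'a set \<Rightarrow> 'a graph" where
  "induced G L = (L, {e \<in> E G. e \<subseteq> L})"

definition graph_iso :: "'b graph \<Rightarrow> 'a graph \<Rightarrow> bool" where
  "graph_iso F G \<longleftrightarrow> (\<exists>f. bij_betw f (V F) (V G) \<and>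
      (\<forall>u\<in>V F. \<forall>v\<in>V F. {u, v} \<in> E F \<longleftrightarrow> {f u, f v} \<in> E G))"

text \<open>Hypergraphs are identified with their edge sets; the vertex set is passed explicitly.\<close>
definition hg_restrict :: "'a set set \<Rightarrow> 'a set \<Rightarrow> 'a set set" where
  "hg_restrict \<G> S = {X \<in> \<G>. X \<subseteq> S}"

definition e_nu :: "'a set set \<Rightarrow> ('a set \<Rightarrow> real) \<Rightarrow> real" where
  "e_nu \<G> \<nu> = (\<Sum>X\<in>\<G>. \<nu> X)"

definition deg_nu :: "'a set set \<Rightarrow> ('a set \<Rightarrow> real) \<Rightarrow> 'a set \<Rightarrow> real" where
  "deg_nu \<G> \<nu> L = (\<Sum>X\<in>{X \<in> \<G>. L \<subseteq> X}. \<nu> X)"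

definition Lambda :: "'a set \<Rightarrow> 'a set set \<Rightarrow> real \<Rightarrow> ('a set \<Rightarrow> real) \<Rightarrow> real" where
  "Lambda Vs \<G> p \<nu> = (\<Sum>L\<in>{L. L \<subseteq> Vs \<and> card L \<ge> 2}. (deg_nu \<G> \<nu> L)^2 * (1/p) ^ card L)"

definition janson :: "'a set \<Rightarrow> 'a set set \<Rightarrow> real \<Rightarrow> real \<Rightarrow> bool" where
  "janson Vs \<G> p R \<longleftrightarrow> (\<exists>\<nu>::'a set \<Rightarrow> real. (\<forall>X\<in>\<G>. \<nu> X \<ge> 0) \<and>
      Lambda Vs \<G> p \<nu> < (e_nu \<G> \<nu>)^2 / R)"

definition Ihg :: "'b graph \<Rightarrow> 'a graph \<Rightarrow> 'a graph \<Rightarrow> 'a set set" where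
  "Ihg F G' G = {L. L \<subseteq> V G \<and> induced G' L = induced G L \<and> graph_iso F (induced G L)}"

definition colour_class :: "'a graph \<Rightarrow> 'a set set \<Rightarrow> ('a set \<Rightarrow> nat) \<Rightarrow> nat \<Rightarrow> 'a graph" where
  "colour_class G Es c i = (V G, {e \<in> Es. c e = i})"

definition pconst :: "nat \<Rightarrow> nat \<Rightarrow> real" where
  "pconst k r = 1 / (2^25 * real k ^ 2 * real r ^ 4)"

definition delta :: "nat \<Rightarrow> real" where
  "delta r = real r powr (-50)"

definition Bfam :: "nat \<Rightarrow> nat \<Rightarrow> (nat \<Rightarrow> 'b graph) \<Rightarrow> 'a graph set" where
  "Bfam k r H = {G. wf_graph G \<and> (\<exists>c::'a set \<Rightarrow> nat. (\<forall>e\<in>E G. c e \<in> {1..r}) \<and>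
      (\<forall>i\<in>{1..r}. \<not> janson (V G) (Ihg (H i) (colour_class G (E G) c i) G)
                     (pconst k r) (pconst k r * vnum G)))}"

definition Bfam' :: "nat \<Rightarrow> nat \<Rightarrow> (nat \<Rightarrow> 'b graph) \<Rightarrow> 'a graph set" where
  "Bfam' k r H = {G. wf_graph G \<and> (\<exists>S. S \<subseteq> V G \<and> real (card S) \<ge> delta r powr (2/3) * vnum G \<and>
      (\<exists>c::'a set \<Rightarrow> nat. (\<forall>e\<in>E (induced G S). c e \<in> {1..r}) \<and>
      (\<forall>i\<in>{1..r}. \<not> janson (V G)
           (hg_restrict (Ihg (H i) (colour_class G (E (induced G S)) c i) G) S)
           (pconst k r) (2 powr (-9) / real r * delta r * pconst k r * vnum G))))}"

end

(*
  Fix a colouring witnessing G \<in> B and let s = \<lceil>\<delta>^(2/3) v(G)\<rceil>. If G \<notin> B', the same colouring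
  fails on every s-set S, so for each S some colour hypergraph J_i restricted to S is
  (p, \<theta> p v)-Janson, where \<theta> = 2^-9 \<delta> / r. Normalise these witnesses to mass 1 and add them up
  over the A_i sets S assigned to colour i. A set L with |L| \<ge> 2 lies in at most a fraction
  \<rho> = s(s-1)/(v(v-1)) of all s-sets, so by Cauchy-Schwarz the sum has \<Lambda>_p below
  \<rho> C(v,s) A_i / (\<theta> p v), while its mass is A_i. As J_i is not (p, p v)-Janson, this forces
  \<theta> A_i \<le> \<rho> C(v,s), and summing over the r colours, which cover all C(v,s) sets, gives \<theta> \<le> r \<rho>.
  But \<rho> is about \<delta>^(4/3), far below \<delta> / (2^9 r^2).
*)

theory Submission
  imports Defs "HOL-Analysis.Convex"
begin

section \<open>Normalised and superposed Janson witnesses\<close>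

lemma Lambda_nonneg: "0 \<le> p \<Longrightarrow> 0 \<le> Lambda Vs \<G> p \<nu>"
  unfolding Lambda_def by (intro sum_nonneg mult_nonneg_nonneg) auto

lemma janson_imp_pos:
  assumes "janson Vs \<G> p R" "0 \<le> p"
  shows "0 < R"
proof (rule ccontr)
  assume "\<not> 0 < R"
  obtain \<nu> where "Lambda Vs \<G> p \<nu> < (e_nu \<G> \<nu>)^2 / R"
    using assms(1) unfolding janson_def by blast
  moreover have "(e_nu \<G> \<nu>)^2 / R \<le> 0"
    using \<open>\<not> 0 < R\<close> by (simp add: divide_nonneg_nonpos)
  ultimately show False
    using Lambda_nonneg[OF assms(2)] by (metis not_le order.strict_trans1)
qed

lemma janson_normalized:
  assumes "janson Vs \<G> p R" "0 \<le> p"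
  obtains \<nu> where "\<And>X. 0 \<le> \<nu> X" "\<And>X. X \<notin> \<G> \<Longrightarrow> \<nu> X = 0"
    "e_nu \<G> \<nu> = 1" "Lambda Vs \<G> p \<nu> < 1 / R"
proof -
  obtain \<nu>\<^sub>0 where nonneg: "\<forall>X\<in>\<G>. 0 \<le> \<nu>\<^sub>0 X"
    and less: "Lambda Vs \<G> p \<nu>\<^sub>0 < (e_nu \<G> \<nu>\<^sub>0)^2 / R"
    using assms(1) unfolding janson_def by blast
  define e where "e = e_nu \<G> \<nu>\<^sub>0"
  have "0 \<le> e"
    unfolding e_def e_nu_def using nonneg by (simp add: sum_nonneg)
  moreover have "e \<noteq> 0"
    using less Lambda_nonneg[OF assms(2)] unfolding e_def by (metis not_less power_zero_numeral div_0)
  ultimately have "0 < e" by simp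
  define \<nu> where "\<nu> X = (if X \<in> \<G> then \<nu>\<^sub>0 X / e else 0)" for X
  have "e_nu \<G> \<nu> = e_nu \<G> \<nu>\<^sub>0 / e"
    unfolding e_nu_def \<nu>_def by (simp add: sum_divide_distrib)
  then have "e_nu \<G> \<nu> = 1"
    using \<open>0 < e\<close> by (simp add: e_def)
  have "deg_nu \<G> \<nu> L = deg_nu \<G> \<nu>\<^sub>0 L / e" for L
    unfolding deg_nu_def \<nu>_def by (simp add: sum_divide_distrib)
  then have "Lambda Vs \<G> p \<nu> = Lambda Vs \<G> p \<nu>\<^sub>0 / e^2"
    unfolding Lambda_def by (simp add: sum_divide_distrib power_divide mult.commute)
  also have "\<dots> < 1 / R"
    using less \<open>0 < e\<close> by (simp add: e_def divide_simps)
  finally show thesis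
    using \<open>e_nu \<G> \<nu> = 1\<close> nonneg \<open>0 < e\<close> by (intro that[of \<nu>]) (auto simp: \<nu>_def)
qed

lemma
  assumes "\<G>' \<subseteq> \<G>" "finite \<G>" "\<And>X. X \<notin> \<G>' \<Longrightarrow> \<nu> X = 0"
  shows e_nu_eq_on_support: "e_nu \<G> \<nu> = e_nu \<G>' \<nu>"
    and Lambda_eq_on_support: "Lambda Vs \<G> p \<nu> = Lambda Vs \<G>' p \<nu>"
proof -
  show "e_nu \<G> \<nu> = e_nu \<G>' \<nu>"
    unfolding e_nu_def by (rule sum.mono_neutral_right) (use assms in auto)
  have "deg_nu \<G> \<nu> L = deg_nu \<G>' \<nu> L" for L
    unfolding deg_nu_def by (rule sum.mono_neutral_right) (use assms in auto)
  then show "Lambda Vs \<G> p \<nu> = Lambda Vs \<G>' p \<nu>"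
    unfolding Lambda_def by simp
qed

lemma Lambda_sum_le:
  fixes \<mu> :: "'a set \<Rightarrow> 'a set \<Rightarrow> real"
  assumes "0 \<le> p" "finite \<A>"
    and supported: "\<And>S X. S \<in> \<A> \<Longrightarrow> \<not> X \<subseteq> S \<Longrightarrow> \<mu> S X = 0"
    and multiplicity: "\<And>L. L \<subseteq> Vs \<Longrightarrow> 2 \<le> card L \<Longrightarrow> real (card {S\<in>\<A>. L \<subseteq> S}) \<le> M"
  shows "Lambda Vs \<G> p (\<lambda>X. \<Sum>S\<in>\<A>. \<mu> S X) \<le> M * (\<Sum>S\<in>\<A>. Lambda Vs \<G> p (\<mu> S))"
proof -
  define w where "w L = (1/p) ^ card L" for L :: "'a set"
  define Ls where "Ls = {L. L \<subseteq> Vs \<and> 2 \<le> card L}"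
  have deg_sum: "deg_nu \<G> (\<lambda>X. \<Sum>S\<in>\<A>. \<mu> S X) L = (\<Sum>S\<in>\<A>. deg_nu \<G> (\<mu> S) L)" for L
    unfolding deg_nu_def by (rule sum.swap)
  have deg_local: "deg_nu \<G> (\<mu> S) L = 0" if "S \<in> \<A>" "\<not> L \<subseteq> S" for S L
    unfolding deg_nu_def using supported[OF that(1)] that(2) by (intro sum.neutral) blast
  have deg_sq: "(deg_nu \<G> (\<lambda>X. \<Sum>S\<in>\<A>. \<mu> S X) L)^2 \<le> M * (\<Sum>S\<in>\<A>. (deg_nu \<G> (\<mu> S) L)^2)"
    if "L \<in> Ls" for L
  proof -
    define \<A>\<^sub>L where "\<A>\<^sub>L = {S\<in>\<A>. L \<subseteq> S}"
    have "deg_nu \<G> (\<lambda>X. \<Sum>S\<in>\<A>. \<mu> S X) L = (\<Sum>S\<in>\<A>\<^sub>L. deg_nu \<G> (\<mu> S) L)"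
      unfolding deg_sum \<A>\<^sub>L_def using deg_local assms(2) by (intro sum.mono_neutral_right) auto
    then have "(deg_nu \<G> (\<lambda>X. \<Sum>S\<in>\<A>. \<mu> S X) L)^2
        \<le> (\<Sum>S\<in>\<A>\<^sub>L. (deg_nu \<G> (\<mu> S) L)^2) * card \<A>\<^sub>L"
      by (metis sum_squared_le_sum_of_squares)
    also have "\<dots> \<le> (\<Sum>S\<in>\<A>. (deg_nu \<G> (\<mu> S) L)^2) * card \<A>\<^sub>L"
      by (intro mult_right_mono sum_mono2) (auto simp: \<A>\<^sub>L_def assms(2))
    also have "\<dots> \<le> (\<Sum>S\<in>\<A>. (deg_nu \<G> (\<mu> S) L)^2) * M"
      using multiplicity that by (intro mult_left_mono) (auto simp: \<A>\<^sub>L_def Ls_def sum_nonneg)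
    finally show ?thesis by (simp add: mult.commute)
  qed
  have "Lambda Vs \<G> p (\<lambda>X. \<Sum>S\<in>\<A>. \<mu> S X) = (\<Sum>L\<in>Ls. (deg_nu \<G> (\<lambda>X. \<Sum>S\<in>\<A>. \<mu> S X) L)^2 * w L)"
    unfolding Lambda_def Ls_def w_def ..
  also have "\<dots> \<le> (\<Sum>L\<in>Ls. M * (\<Sum>S\<in>\<A>. (deg_nu \<G> (\<mu> S) L)^2) * w L)"
    using deg_sq assms(1) by (intro sum_mono mult_right_mono) (auto simp: w_def)
  also have "\<dots> = M * (\<Sum>S\<in>\<A>. Lambda Vs \<G> p (\<mu> S))"
    unfolding Lambda_def Ls_def w_def
    by (simp add: sum_distrib_left sum_distrib_right mult.assoc sum.swap[of _ _ \<A>])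
  finally show ?thesis .
qed

lemma card_janson_restrictions_le:
  assumes "0 \<le> p" "0 < R" "0 \<le> M" "finite \<G>" "finite \<A>"
    and not_janson: "\<not> janson Vs \<G> p R"
    and janson_restr: "\<And>S. S \<in> \<A> \<Longrightarrow> janson Vs (hg_restrict \<G> S) p R'"
    and multiplicity: "\<And>L. L \<subseteq> Vs \<Longrightarrow> 2 \<le> card L \<Longrightarrow> real (card {S\<in>\<A>. L \<subseteq> S}) \<le> M"
  shows "real (card \<A>) * R' \<le> M * R"
proof (cases "\<A> = {}")
  case True
  then show ?thesis using assms by simp
next
  case False
  then have "0 < R'"
    using janson_restr janson_imp_pos assms(1) by (meson ex_in_conv)
  have "\<exists>\<nu>. (\<forall>X. 0 \<le> \<nu> X) \<and> (\<forall>X. X \<notin> hg_restrict \<G> S \<longrightarrow> \<nu> X = 0)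
      \<and> e_nu (hg_restrict \<G> S) \<nu> = 1 \<and> Lambda Vs (hg_restrict \<G> S) p \<nu> < 1 / R'"
    if "S \<in> \<A>" for S
    using janson_normalized[OF janson_restr[OF that] assms(1)] by metis
  then obtain \<mu> where \<mu>: "\<And>S X. S \<in> \<A> \<Longrightarrow> 0 \<le> \<mu> S X"
      "\<And>S X. S \<in> \<A> \<Longrightarrow> X \<notin> hg_restrict \<G> S \<Longrightarrow> \<mu> S X = 0"
      "\<And>S. S \<in> \<A> \<Longrightarrow> e_nu (hg_restrict \<G> S) (\<mu> S) = 1"
      "\<And>S. S \<in> \<A> \<Longrightarrow> Lambda Vs (hg_restrict \<G> S) p (\<mu> S) < 1 / R'"
    by metis
  have restr_sub: "hg_restrict \<G> S \<subseteq> \<G>" for S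
    unfolding hg_restrict_def by auto
  have e_nu_1: "e_nu \<G> (\<mu> S) = 1" and Lambda_less: "Lambda Vs \<G> p (\<mu> S) < 1 / R'" if "S \<in> \<A>" for S
    using e_nu_eq_on_support[OF restr_sub assms(4) \<mu>(2)[OF that]]
      Lambda_eq_on_support[OF restr_sub assms(4) \<mu>(2)[OF that]] \<mu>(3,4)[OF that] by auto
  define \<nu> where "\<nu> X = (\<Sum>S\<in>\<A>. \<mu> S X)" for X
  have "e_nu \<G> \<nu> = (\<Sum>S\<in>\<A>. e_nu \<G> (\<mu> S))"
    unfolding e_nu_def \<nu>_def by (rule sum.swap)
  then have "e_nu \<G> \<nu> = card \<A>"
    using e_nu_1 by simp
  moreover have "\<forall>X\<in>\<G>. 0 \<le> \<nu> X"
    unfolding \<nu>_def using \<mu>(1) by (simp add: sum_nonneg)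
  ultimately have "real (card \<A>)^2 / R \<le> Lambda Vs \<G> p \<nu>"
    using not_janson unfolding janson_def by (metis not_less)
  also have "\<dots> \<le> M * (\<Sum>S\<in>\<A>. Lambda Vs \<G> p (\<mu> S))"
    unfolding \<nu>_def using assms(1,5) multiplicity \<mu>(2)
    by (intro Lambda_sum_le) (auto simp: hg_restrict_def)
  also have "\<dots> \<le> M * (\<Sum>S\<in>\<A>. 1 / R')"
    using Lambda_less assms(3) by (intro mult_left_mono sum_mono) (auto intro: less_imp_le)
  finally have "real (card \<A>) * (real (card \<A>) * R') \<le> real (card \<A>) * (M * R)"
    using \<open>0 < R'\<close> assms(2) by (simp add: field_simps power2_eq_square)
  then show ?thesis
    using False assms(5) by (simp add: card_gt_0_iff)
qed

section \<open>Subsets containing a fixed set\<close>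

lemma times_binomial_minus2_eq:
  assumes "2 \<le> k"
  shows "k * (k - 1) * (n choose k) = n * (n - 1) * ((n - 2) choose (k - 2))"
proof -
  have "k * (n choose k) = n * ((n - 1) choose (k - 1))"
    using assms by (intro times_binomial_minus1_eq) simp
  moreover have "(k - 1) * ((n - 1) choose (k - 1)) = (n - 1) * ((n - 2) choose (k - 2))"
    using times_binomial_minus1_eq[of "k - 1" "n - 1"] assms by (simp add: diff_diff_left numeral_2_eq_2)
  ultimately show ?thesis
    by (metis mult.assoc mult.left_commute)
qed

lemma card_subsets_containing:
  assumes "finite Vs" "P \<subseteq> Vs" "card P \<le> s"
  shows "card {S. S \<subseteq> Vs \<and> card S = s \<and> P \<subseteq> S} = (card Vs - card P) choose (s - card P)"
proof -
  have "finite P"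
    using assms finite_subset by blast
  have "bij_betw (\<lambda>S. S - P) {S. S \<subseteq> Vs \<and> card S = s \<and> P \<subseteq> S}
      {T. T \<subseteq> Vs - P \<and> card T = s - card P}"
  proof (rule bij_betw_byWitness[where f' = "\<lambda>T. T \<union> P"])
    show "(\<lambda>S. S - P) ` {S. S \<subseteq> Vs \<and> card S = s \<and> P \<subseteq> S} \<subseteq> {T. T \<subseteq> Vs - P \<and> card T = s - card P}"
      using assms \<open>finite P\<close> by (auto simp: card_Diff_subset)
    show "(\<lambda>T. T \<union> P) ` {T. T \<subseteq> Vs - P \<and> card T = s - card P} \<subseteq> {S. S \<subseteq> Vs \<and> card S = s \<and> P \<subseteq> S}"
    proof (intro image_subsetI CollectI conjI)
      fix T assume "T \<in> {T. T \<subseteq> Vs - P \<and> card T = s - card P}"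
      then have "finite T" "T \<inter> P = {}" "card T = s - card P"
        using assms(1) finite_subset by auto
      then show "card (T \<union> P) = s"
        using assms(3) \<open>finite P\<close> by (simp add: card_Un_disjoint)
    qed (use assms in auto)
  qed auto
  then have "card {S. S \<subseteq> Vs \<and> card S = s \<and> P \<subseteq> S} = card {T. T \<subseteq> Vs - P \<and> card T = s - card P}"
    by (rule bij_betw_same_card)
  also have "\<dots> = card (Vs - P) choose (s - card P)"
    using assms by (simp add: n_subsets)
  finally show ?thesis
    using assms \<open>finite P\<close> by (simp add: card_Diff_subset)
qed

lemma card_subsets_containing_le:
  assumes "finite Vs" "L \<subseteq> Vs" "2 \<le> card L" "s \<le> card Vs"
  shows "real (card {S. S \<subseteq> Vs \<and> card S = s \<and> L \<subseteq> S})
    \<le> real (card Vs choose s) * (real s * (real s - 1) / (real (card Vs) * (real (card Vs) - 1)))"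
proof (cases "2 \<le> s")
  case False
  have "{S. S \<subseteq> Vs \<and> card S = s \<and> L \<subseteq> S} = {}"
    using assms False by (auto dest: card_mono[OF finite_subset])
  then have "card {S. S \<subseteq> Vs \<and> card S = s \<and> L \<subseteq> S} = 0"
    by (simp only: card.empty)
  moreover have "real s * (real s - 1) = 0"
    using False by (cases s) auto
  ultimately show ?thesis
    by (simp only: of_nat_0 div_0 mult_zero_right order.refl)
next
  case True
  obtain P where "P \<subseteq> L" "card P = 2"
    using assms(3) obtain_subset_with_card_n by metis
  have "card {S. S \<subseteq> Vs \<and> card S = s \<and> L \<subseteq> S} \<le> card {S. S \<subseteq> Vs \<and> card S = s \<and> P \<subseteq> S}"
    using assms \<open>P \<subseteq> L\<close> by (intro card_mono) auto
  also have "\<dots> = (card Vs - 2) choose (s - 2)"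
    using card_subsets_containing[of Vs P s] assms True \<open>P \<subseteq> L\<close> \<open>card P = 2\<close> by auto
  finally have "real (card {S. S \<subseteq> Vs \<and> card S = s \<and> L \<subseteq> S}) \<le> real ((card Vs - 2) choose (s - 2))"
    by linarith
  also have "\<dots> = real (card Vs choose s) * (real s * (real s - 1) / (real (card Vs) * (real (card Vs) - 1)))"
  proof -
    have "real (s * (s - 1) * (card Vs choose s))
        = real (card Vs * (card Vs - 1) * ((card Vs - 2) choose (s - 2)))"
      by (simp only: times_binomial_minus2_eq[OF True])
    then have "real ((card Vs - 2) choose (s - 2)) * (real (card Vs) * (real (card Vs) - 1))
        = real (card Vs choose s) * (real s * (real s - 1))"
      using True assms(4) by (simp add: mult_ac)
    moreover have "real (card Vs) * (real (card Vs) - 1) \<noteq> 0"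
      using True assms(4) by simp
    ultimately show ?thesis
      by (simp add: eq_divide_eq)
  qed
  finally show ?thesis .
qed

section \<open>Janson restrictions to all sets of a fixed size\<close>

lemma card_janson_subsets_le:
  assumes "finite Vs" "finite \<G>" "0 \<le> p" "0 < R" "s \<le> card Vs" "\<not> janson Vs \<G> p R"
  shows "real (card {S. S \<subseteq> Vs \<and> card S = s \<and> janson Vs (hg_restrict \<G> S) p R'}) * R'
    \<le> real (card Vs choose s) * (real s * (real s - 1) / (real (card Vs) * (real (card Vs) - 1))) * R"
proof (rule card_janson_restrictions_le[OF assms(3,4) _ assms(2) _ assms(6)])
  have nonneg: "0 \<le> real n * (real n - 1)" for n :: nat
    by (cases n) auto
  show "0 \<le> real (card Vs choose s) * (real s * (real s - 1) / (real (card Vs) * (real (card Vs) - 1)))"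
    by (rule mult_nonneg_nonneg[OF of_nat_0_le_iff divide_nonneg_nonneg[OF nonneg nonneg]])
  show "finite {S. S \<subseteq> Vs \<and> card S = s \<and> janson Vs (hg_restrict \<G> S) p R'}"
    using assms(1) by simp
  fix L assume "L \<subseteq> Vs" "2 \<le> card L"
  have "card {S \<in> {S. S \<subseteq> Vs \<and> card S = s \<and> janson Vs (hg_restrict \<G> S) p R'}. L \<subseteq> S}
      \<le> card {S. S \<subseteq> Vs \<and> card S = s \<and> L \<subseteq> S}"
    using assms(1) by (intro card_mono) auto
  also have "real \<dots> \<le> real (card Vs choose s) * (real s * (real s - 1) / (real (card Vs) * (real (card Vs) - 1)))"
    by (rule card_subsets_containing_le[OF assms(1) \<open>L \<subseteq> Vs\<close> \<open>2 \<le> card L\<close> assms(5)])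
  finally show "real (card {S \<in> {S. S \<subseteq> Vs \<and> card S = s \<and> janson Vs (hg_restrict \<G> S) p R'}. L \<subseteq> S})
      \<le> real (card Vs choose s) * (real s * (real s - 1) / (real (card Vs) * (real (card Vs) - 1)))"
    by simp
qed simp

lemma janson_restrictions_threshold:
  fixes \<G> :: "'i \<Rightarrow> 'a set set"
  assumes "finite Vs" "finite I" "0 \<le> p" "0 < R" "s \<le> card Vs"
    and hypergraphs: "\<And>i. i \<in> I \<Longrightarrow> \<G> i \<subseteq> Pow Vs"
    and not_janson: "\<And>i. i \<in> I \<Longrightarrow> \<not> janson Vs (\<G> i) p R"
    and cover: "\<And>S. S \<subseteq> Vs \<Longrightarrow> card S = s \<Longrightarrow> \<exists>i\<in>I. janson Vs (hg_restrict (\<G> i) S) p R'"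
  shows "R' \<le> real (card I) * (real s * (real s - 1) / (real (card Vs) * (real (card Vs) - 1))) * R"
proof -
  define \<rho> where "\<rho> = real s * (real s - 1) / (real (card Vs) * (real (card Vs) - 1))"
  define F where "F = {S. S \<subseteq> Vs \<and> card S = s}"
  define \<A> where "\<A> i = {S. S \<subseteq> Vs \<and> card S = s \<and> janson Vs (hg_restrict (\<G> i) S) p R'}" for i
  have "finite F" "card F = card Vs choose s"
    using assms(1) by (simp_all add: F_def n_subsets)
  then have "0 < card F"
    using assms(5) by simp
  then obtain S where "S \<subseteq> Vs" "card S = s"
    by (auto simp: F_def card_gt_0_iff)
  then obtain i where "janson Vs (hg_restrict (\<G> i) S) p R'"
    using cover by blast
  then have "0 < R'"
    by (rule janson_imp_pos) (use assms(3) in simp)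
  have "F \<subseteq> (\<Union>i\<in>I. \<A> i)"
    using cover by (auto simp: F_def \<A>_def)
  then have "card F \<le> card (\<Union>i\<in>I. \<A> i)"
    using assms(1,2) by (intro card_mono) (auto simp: \<A>_def)
  also have "\<dots> \<le> (\<Sum>i\<in>I. card (\<A> i))"
    by (rule card_UN_le[OF assms(2)])
  finally have "real (card F) * R' \<le> (\<Sum>i\<in>I. real (card (\<A> i))) * R'"
    using \<open>0 < R'\<close> by (intro mult_right_mono) (simp_all flip: of_nat_sum)
  also have "\<dots> = (\<Sum>i\<in>I. real (card (\<A> i)) * R')"
    by (rule sum_distrib_right)
  also have "\<dots> \<le> (\<Sum>i\<in>I. real (card F) * \<rho> * R)"
  proof (rule sum_mono)
    fix i assume "i \<in> I"
    have "finite (\<G> i)"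
      using hypergraphs[OF \<open>i \<in> I\<close>] assms(1) by (meson finite_Pow_iff finite_subset)
    then show "real (card (\<A> i)) * R' \<le> real (card F) * \<rho> * R"
      unfolding \<A>_def \<rho>_def \<open>card F = card Vs choose s\<close>
      using card_janson_subsets_le assms(1,3,4,5) not_janson[OF \<open>i \<in> I\<close>] by blast
  qed
  also have "\<dots> = real (card F) * (real (card I) * \<rho> * R)"
    by (simp add: mult_ac)
  finally have "R' \<le> real (card I) * \<rho> * R"
    using \<open>0 < card F\<close> by simp
  then show ?thesis
    by (simp only: \<rho>_def)
qed

section \<open>Colour classes and the family B'\<close>

lemma colour_classes_janson_threshold:
  fixes H :: "nat \<Rightarrow> 'b graph" and G :: "'a graph"
  assumes "wf_graph G" "0 < p" "0 < vnum G" "s \<le> card (V G)"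
    and not_janson: "\<forall>i\<in>{1..r}. \<not> janson (V G) (Ihg (H i) (colour_class G Es c i) G) p (p * vnum G)"
    and cover: "\<And>S. S \<subseteq> V G \<Longrightarrow> card S = s \<Longrightarrow>
      \<exists>i\<in>{1..r}. janson (V G) (hg_restrict (Ihg (H i) (colour_class G Es c i) G) S) p (\<theta> * p * vnum G)"
  shows "\<theta> \<le> real r * (real s * (real s - 1) / (vnum G * (vnum G - 1)))"
proof -
  define \<rho> where "\<rho> = real s * (real s - 1) / (vnum G * (vnum G - 1))"
  have "\<theta> * p * vnum G \<le> real (card {1..r}) * \<rho> * (p * vnum G)"
    unfolding \<rho>_def vnum_def
  proof (rule janson_restrictions_threshold[where \<G> = "\<lambda>i. Ihg (H i) (colour_class G Es c i) G"])
    show "finite (V G)"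
      using assms(1) by (simp add: wf_graph_def)
    show "Ihg (H i) (colour_class G Es c i) G \<subseteq> Pow (V G)" for i
      by (auto simp: Ihg_def)
    show "\<not> janson (V G) (Ihg (H i) (colour_class G Es c i) G) p (p * real (card (V G)))"
      if "i \<in> {1..r}" for i
      using not_janson that by (simp add: vnum_def)
  qed (use assms in \<open>simp_all add: vnum_def less_imp_le\<close>)
  then have "\<theta> * (p * vnum G) \<le> (real r * \<rho>) * (p * vnum G)"
    by (simp add: mult_ac)
  then show ?thesis
    unfolding \<rho>_def by (rule mult_right_le_imp_le) (use assms(2,3) in simp)
qed

lemma hg_restrict_Ihg_induced_colour_class:
  "hg_restrict (Ihg F (colour_class G (E (induced G S)) c i) G) S
     = hg_restrict (Ihg F (colour_class G (E G) c i) G) S"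
proof -
  have "induced (colour_class G (E (induced G S)) c i) L = induced (colour_class G (E G) c i) L"
    if "L \<subseteq> S" for L
    using that unfolding induced_def colour_class_def E_def by auto
  then show ?thesis
    unfolding hg_restrict_def Ihg_def by auto
qed

lemma janson_restriction_if_not_Bfam':
  assumes "wf_graph G" "\<forall>e\<in>E G. c e \<in> {1..r}" "G \<notin> Bfam' k r H"
    and "S \<subseteq> V G" "delta r powr (2/3) * vnum G \<le> real (card S)"
  shows "\<exists>i\<in>{1..r}. janson (V G) (hg_restrict (Ihg (H i) (colour_class G (E G) c i) G) S)
           (pconst k r) (2 powr (-9) / real r * delta r * pconst k r * vnum G)"
proof (rule ccontr)
  assume "\<not> ?thesis"
  moreover have "\<forall>e\<in>E (induced G S). c e \<in> {1..r}"
    using assms(2) by (auto simp: induced_def E_def)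
  ultimately have "G \<in> Bfam' k r H"
    using assms(1,4,5) unfolding Bfam'_def by (auto simp: hg_restrict_Ihg_induced_colour_class)
  with assms(3) show False ..
qed

lemma vnum_pos_if_not_Bfam':
  assumes "wf_graph G" "\<forall>e\<in>E G. c e \<in> {1..r}" "G \<notin> Bfam' k r H"
  shows "0 < vnum G"
proof (rule ccontr)
  assume "\<not> 0 < vnum G"
  then obtain i where "janson (V G) (hg_restrict (Ihg (H i) (colour_class G (E G) c i) G) {}) (pconst k r) 0"
    using janson_restriction_if_not_Bfam'[OF assms, of "{}"] by (auto simp: vnum_def)
  moreover have "0 \<le> pconst k r"
    by (simp add: pconst_def)
  ultimately show False
    using janson_imp_pos by fastforce
qed

section \<open>The constants\<close>

lemma pair_density_lt:
  fixes y :: real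
  assumes "2 \<le> s" "s \<le> v" "real s < y * real v + 1"
  shows "real s * (real s - 1) / (real v * (real v - 1)) < 4 * y^2"
proof -
  have "real s * (real s - 1) \<le> 2 * (real s - 1) * (real s - 1)"
    using assms(1) by (intro mult_right_mono) auto
  also have "\<dots> < 2 * (y * real v) * (y * real v)"
  proof -
    have bounds: "0 < real s - 1" "real s - 1 < y * real v"
      using assms by auto
    show ?thesis
      by (rule mult_strict_mono) (use bounds in auto)
  qed
  also have "\<dots> \<le> 4 * y^2 * (real v * (real v - 1))"
  proof -
    have "real v * real v \<le> 2 * (real v * (real v - 1))"
      using assms(1,2) by (simp add: algebra_simps)
    then have "2 * y^2 * (real v * real v) \<le> 2 * y^2 * (2 * (real v * (real v - 1)))"
      by (rule mult_left_mono) simp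
    then show ?thesis
      by (simp add: power2_eq_square algebra_simps)
  qed
  finally show ?thesis
    using assms(1,2) by (simp add: pos_divide_less_eq)
qed

lemma delta_eq_powers:
  assumes "0 < r"
  shows "delta r = (real r powr (-50/3))^3" "delta r powr (2/3) = (real r powr (-50/3))^2"
proof -
  have "0 < real r powr (-50/3)"
    using assms by simp
  then show "delta r = (real r powr (-50/3))^3" "delta r powr (2/3) = (real r powr (-50/3))^2"
    unfolding delta_def by (simp_all add: powr_powr flip: powr_realpow)
qed

lemma powr_minus_50_thirds_bound:
  assumes "2 \<le> r"
  shows "2^11 * real r^2 * real r powr (-50/3) \<le> 1"
proof -
  have "(2::real) powr 11 \<le> real r powr 11"
    using assms by (intro powr_mono2) auto
  then have "2 powr 11 * real r powr 2 * real r powr (-50/3)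
      \<le> real r powr 11 * real r powr 2 * real r powr (-50/3)"
    by (intro mult_right_mono) auto
  also have "\<dots> = real r powr (-11/3)"
    by (simp only: powr_add[symmetric]) simp
  also have "\<dots> \<le> 1"
    using assms by (intro less_imp_le powr_less_one) auto
  finally show ?thesis
    using assms by simp
qed

lemma delta_powr_two_thirds_le_one:
  assumes "2 \<le> r"
  shows "delta r powr (2/3) \<le> 1"
proof -
  have "real r powr (-50/3) \<le> 1"
    using assms by (intro less_imp_le powr_less_one) auto
  then show ?thesis
    using delta_eq_powers(2)[of r] assms by (simp add: power_le_one)
qed

lemma nat_ceiling_delta_le:
  assumes "2 \<le> r"
  shows "nat \<lceil>delta r powr (2/3) * real v\<rceil> \<le> v"
  using delta_powr_two_thirds_le_one[OF assms]
  by (simp add: nat_le_iff ceiling_le_iff mult_left_le_one_le)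

lemma pair_density_lt_delta:
  assumes "2 \<le> r" "s = nat \<lceil>delta r powr (2/3) * real v\<rceil>"
  shows "real r * (real s * (real s - 1) / (real v * (real v - 1))) < 2 powr (-9) / real r * delta r"
proof (cases "2 \<le> s")
  case False
  then have "s = 0 \<or> s = 1"
    by auto
  moreover have "0 < 2 powr (-9) / real r * delta r"
    using assms(1) by (simp add: delta_def)
  ultimately show ?thesis
    by auto
next
  case True
  define x where "x = real r powr (-50/3)"
  have "0 < x"
    using assms(1) by (simp add: x_def)
  have delta: "delta r = x^3" "delta r powr (2/3) = x^2"
    using delta_eq_powers[of r] assms(1) by (simp_all add: x_def)
  have "s \<le> v"
    using nat_ceiling_delta_le[OF assms(1)] assms(2) by simp
  moreover have "real s < x^2 * real v + 1"
  proof -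
    have "0 \<le> x^2 * real v"
      by simp
    then show ?thesis
      unfolding assms(2) delta(2) by linarith
  qed
  ultimately have "real s * (real s - 1) / (real v * (real v - 1)) < 4 * (x^2)^2"
    by (rule pair_density_lt[OF True])
  then have "real r * (real s * (real s - 1) / (real v * (real v - 1))) < real r * (4 * (x^2)^2)"
    using assms(1) by (intro mult_strict_left_mono) auto
  also have "\<dots> = (2^11 * real r^2 * x) * (x^3 / (2^9 * real r))"
    using assms(1) by (simp add: field_simps eval_nat_numeral)
  also have "\<dots> \<le> x^3 / (2^9 * real r)"
    using powr_minus_50_thirds_bound[OF assms(1), folded x_def] \<open>0 < x\<close>
    by (intro mult_left_le_one_le) auto
  also have "\<dots> = 2 powr (-9) / real r * delta r"
    by (simp add: delta powr_neg_numeral)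
  finally show ?thesis .
qed

theorem lemma6p2:
  fixes k r :: nat and H :: "nat \<Rightarrow> 'b graph"
  assumes "r \<ge> 2" and "k \<ge> 1"
    and "\<forall>i\<in>{1..r}. wf_graph (H i)"
  shows "(Bfam k r H :: 'a graph set) \<subseteq> Bfam' k r H"
proof
  fix G :: "'a graph"
  assume "G \<in> Bfam k r H"
  then obtain c where wf: "wf_graph G" and colouring: "\<forall>e\<in>E G. c e \<in> {1..r}"
    and not_janson: "\<forall>i\<in>{1..r}. \<not> janson (V G) (Ihg (H i) (colour_class G (E G) c i) G)
                                    (pconst k r) (pconst k r * vnum G)"
    unfolding Bfam_def by blast
  define s where "s = nat \<lceil>delta r powr (2/3) * vnum G\<rceil>"
  show "G \<in> Bfam' k r H"
  proof (rule ccontr)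
    assume "G \<notin> Bfam' k r H"
    note cover = janson_restriction_if_not_Bfam'[OF wf colouring this]
    have "s \<le> card (V G)"
      using nat_ceiling_delta_le[OF assms(1)] by (simp add: s_def vnum_def)
    have "2 powr (-9) / real r * delta r \<le> real r * (real s * (real s - 1) / (vnum G * (vnum G - 1)))"
    proof (rule colour_classes_janson_threshold[OF wf _ _ \<open>s \<le> card (V G)\<close> not_janson])
      show "0 < pconst k r"
        using assms(1,2) by (simp add: pconst_def)
      show "0 < vnum G"
        using vnum_pos_if_not_Bfam'[OF wf colouring \<open>G \<notin> Bfam' k r H\<close>] .
      show "\<exists>i\<in>{1..r}. janson (V G) (hg_restrict (Ihg (H i) (colour_class G (E G) c i) G) S)
          (pconst k r) (2 powr (-9) / real r * delta r * pconst k r * vnum G)"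
        if "S \<subseteq> V G" "card S = s" for S
        using cover[OF that(1)] that(2) by (simp add: s_def vnum_def)
    qed
    then show False
      using pair_density_lt_delta[OF assms(1) s_def[unfolded vnum_def]] by (simp add: vnum_def)
  qed
qed

end
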